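(* Let $P_7(\lambda;m,\varepsilon)$ be the seventh-order polynomial in $\lambda$ defined in the context. There exist $\upsilon_0>0$ and $\varepsilon_*>0$ such that, for all $m\in[3,7]$, all $\varepsilon\in(0,\varepsilon_* )$ and any purely imaginary root $i\upsilon$ of $P_7(\cdot;m,\varepsilon)$ with $\upsilon>0$, it holds that $0<\upsilon<\upsilon_0$.
   Context: $P_7(\lambda;m,\varepsilon)=a_0\lambda^7+a_1\lambda^6+a_2\lambda^5+a_3\lambda^4+a_4\lambda^3+a_5\lambda^2+a_6\lambda+a_7$ with $a_i=a_i(m,\varepsilon)$: $a_0=2^{11}(\varepsilon-1)^4\varepsilon^2$; $a_1=-2^{11}(\varepsilon^2-\varepsilon)^2[(5\varepsilon^2-2\varepsilon+1)m^2+2(\varepsilon+1)^2m+4]$; $a_2=(\varepsilon^2-\varepsilon)[\varepsilon(59\varepsilon^3-9\varepsilon^2+17\varepsilon-3)m^4+4\varepsilon(15\varepsilon^3+15\varepsilon^2+17\varepsilon+1)m^3+4(\varepsilon+2)(\varepsilon^3+9\varepsilon^2+5\varepsilon+1)m^2-8(2\varepsilon^3-3\varepsilon^2-4\varepsilon-3)m-8(\varepsilon-1)(\varepsilon+2)]$; $a_3=2^7[-\varepsilon^2(5\varepsilon-1)(9\varepsilon^3+\varepsilon^2+7\varepsilon-1)m^6-2\varepsilon^2(59\varepsilon^4-8\varepsilon^3+74\varepsilon^2+8\varepsilon-5)m^5-4\varepsilon(4\varepsilon^5+27\varepsilon^4+24\varepsilon^3+37\varepsilon^2+6\varepsilon-2)m^4+4\varepsilon(4\varepsilon^5+20\varepsilon^4-31\varepsilon^3-23\varepsilon^2-33\varepsilon-1)m^3+4(9\varepsilon^5+27\varepsilon^4-15\varepsilon^3-24\varepsilon^2-12\varepsilon-1)m^2+4(\varepsilon^4+17\varepsilon^3-7\varepsilon^2-9\varepsilon-2)m-4(\varepsilon-1)^2(2\varepsilon+1)]$;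 $a_4=2^3[\varepsilon^2(9\varepsilon-1)^2(\varepsilon-1)^2m^8+8\varepsilon^2(\varepsilon-1)(45\varepsilon^3+5\varepsilon^2-21\varepsilon+3)m^7+8\varepsilon(21\varepsilon^5-58\varepsilon^4-84\varepsilon^3-32\varepsilon^2+27\varepsilon-2)m^6-16\varepsilon(34\varepsilon^5+42\varepsilon^4+113\varepsilon^3+81\varepsilon^2-7\varepsilon-7)m^5-16(7\varepsilon^6+96\varepsilon^5+75\varepsilon^4+176\varepsilon^3+42\varepsilon^2-10\varepsilon-2)m^4+16\varepsilon(6\varepsilon^4-75\varepsilon^3-65\varepsilon^2-117\varepsilon-5)m^3+16(29\varepsilon^4-7\varepsilon^3-48\varepsilon^2-31\varepsilon-7)m^2+32(\varepsilon-1)(7\varepsilon^2+14\varepsilon+3)m-16(\varepsilon-1)^2]$; $a_5=2^5m[\varepsilon^2(\varepsilon-1)^2(9\varepsilon^2+\varepsilon-2)m^7+(\varepsilon^2-\varepsilon)(38\varepsilon^4+46\varepsilon^3-39\varepsilon^2+3)m^6+(36\varepsilon^6+33\varepsilon^5-123\varepsilon^4-95\varepsilon^3+54\varepsilon^2-1)m^5-(8\varepsilon^6-8\varepsilon^5+169\varepsilon^4+233\varepsilon^3+25\varepsilon^2-41\varepsilon-2)m^4-(60\varepsilon^5+110\varepsilon^4+320\varepsilon^3+129\varepsilon^2-22\varepsilon-21)m^3-4(16\varepsilon^4+37\varepsilon^3+41\varepsilon^2+7\varepsilon-5)m^2+2(4\varepsilon^3-37\varepsilon^2-10\varepsilon-5)m+4(5\varepsilon^2-2\varepsilon-3)]$;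 $a_6=2^3m[2\varepsilon^2(\varepsilon-1)^2(\varepsilon+1)(2\varepsilon-1)m^7+(\varepsilon^2-\varepsilon)(16\varepsilon^4+58\varepsilon^3-19\varepsilon^2-10\varepsilon+3)m^6+(16\varepsilon^6+72\varepsilon^5-39\varepsilon^4-171\varepsilon^3+42\varepsilon^2+17\varepsilon-1)m^5+2(20\varepsilon^5-12\varepsilon^4-113\varepsilon^3-69\varepsilon^2+41\varepsilon+5)m^4-(2\varepsilon+1)(18\varepsilon^3+81\varepsilon^2+80\varepsilon-51)m^3-4(28\varepsilon^3+31\varepsilon^2+20\varepsilon-15)m^2-4(11\varepsilon-3)(\varepsilon+1)m-8(1-\varepsilon)]$; $a_7=2^4(m^2+m^3)[\varepsilon^2(\varepsilon^2-1)(2\varepsilon-1)m^4+\varepsilon(2\varepsilon-1)(3\varepsilon^2-3\varepsilon-2)m^3+(2\varepsilon^4-13\varepsilon^2+4\varepsilon+1)m^2-3(2\varepsilon-1)(\varepsilon+1)m+2(1-2\varepsilon)]$. *)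

theory Defs
  imports Complex_Main "HOL-Computational_Algebra.Polynomial"
begin

definition a0 :: "real \<Rightarrow> real \<Rightarrow> real" where
  "a0 m e = 2^11 * (e - 1)^4 * e^2"

definition a1 :: "real \<Rightarrow> real \<Rightarrow> real" where
  "a1 m e = - (2^11) * (e^2 - e)^2 * ((5*e^2 - 2*e + 1)*m^2 + 2*(e + 1)^2*m + 4)"

definition a2 :: "real \<Rightarrow> real \<Rightarrow> real" where
  "a2 m e = (e^2 - e) * (e*(59*e^3 - 9*e^2 + 17*e - 3)*m^4
     + 4*e*(15*e^3 + 15*e^2 + 17*e + 1)*m^3
     + 4*(e + 2)*(e^3 + 9*e^2 + 5*e + 1)*m^2
     - 8*(2*e^3 - 3*e^2 - 4*e - 3)*m
     - 8*(e - 1)*(e + 2))"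

definition a3 :: "real \<Rightarrow> real \<Rightarrow> real" where
  "a3 m e = 2^7 * ( - (e^2*(5*e - 1)*(9*e^3 + e^2 + 7*e - 1)*m^6)
     - 2*e^2*(59*e^4 - 8*e^3 + 74*e^2 + 8*e - 5)*m^5
     - 4*e*(4*e^5 + 27*e^4 + 24*e^3 + 37*e^2 + 6*e - 2)*m^4
     + 4*e*(4*e^5 + 20*e^4 - 31*e^3 - 23*e^2 - 33*e - 1)*m^3
     + 4*(9*e^5 + 27*e^4 - 15*e^3 - 24*e^2 - 12*e - 1)*m^2
     + 4*(e^4 + 17*e^3 - 7*e^2 - 9*e - 2)*m
     - 4*(e - 1)^2*(2*e + 1))"

definition a4 :: "real \<Rightarrow> real \<Rightarrow> real" where
  "a4 m e = 2^3 * ( e^2*(9*e - 1)^2*(e - 1)^2*m^8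
     + 8*e^2*(e - 1)*(45*e^3 + 5*e^2 - 21*e + 3)*m^7
     + 8*e*(21*e^5 - 58*e^4 - 84*e^3 - 32*e^2 + 27*e - 2)*m^6
     - 16*e*(34*e^5 + 42*e^4 + 113*e^3 + 81*e^2 - 7*e - 7)*m^5
     - 16*(7*e^6 + 96*e^5 + 75*e^4 + 176*e^3 + 42*e^2 - 10*e - 2)*m^4
     + 16*e*(6*e^4 - 75*e^3 - 65*e^2 - 117*e - 5)*m^3
     + 16*(29*e^4 - 7*e^3 - 48*e^2 - 31*e - 7)*m^2
     + 32*(e - 1)*(7*e^2 + 14*e + 3)*m
     - 16*(e - 1)^2)"

definition a5 :: "real \<Rightarrow> real \<Rightarrow> real" where
  "a5 m e = 2^5 * m * ( e^2*(e - 1)^2*(9*e^2 + e - 2)*m^7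
     + (e^2 - e)*(38*e^4 + 46*e^3 - 39*e^2 + 3)*m^6
     + (36*e^6 + 33*e^5 - 123*e^4 - 95*e^3 + 54*e^2 - 1)*m^5
     - (8*e^6 - 8*e^5 + 169*e^4 + 233*e^3 + 25*e^2 - 41*e - 2)*m^4
     - (60*e^5 + 110*e^4 + 320*e^3 + 129*e^2 - 22*e - 21)*m^3
     - 4*(16*e^4 + 37*e^3 + 41*e^2 + 7*e - 5)*m^2
     + 2*(4*e^3 - 37*e^2 - 10*e - 5)*m
     + 4*(5*e^2 - 2*e - 3))"

definition a6 :: "real \<Rightarrow> real \<Rightarrow> real" where
  "a6 m e = 2^3 * m * ( 2*e^2*(e - 1)^2*(e + 1)*(2*e - 1)*m^7
     + (e^2 - e)*(16*e^4 + 58*e^3 - 19*e^2 - 10*e + 3)*m^6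
     + (16*e^6 + 72*e^5 - 39*e^4 - 171*e^3 + 42*e^2 + 17*e - 1)*m^5
     + 2*(20*e^5 - 12*e^4 - 113*e^3 - 69*e^2 + 41*e + 5)*m^4
     - (2*e + 1)*(18*e^3 + 81*e^2 + 80*e - 51)*m^3
     - 4*(28*e^3 + 31*e^2 + 20*e - 15)*m^2
     - 4*(11*e - 3)*(e + 1)*m
     - 8*(1 - e))"

definition a7 :: "real \<Rightarrow> real \<Rightarrow> real" where
  "a7 m e = 2^4 * (m^2 + m^3) * ( e^2*(e^2 - 1)*(2*e - 1)*m^4
     + e*(2*e - 1)*(3*e^2 - 3*e - 2)*m^3
     + (2*e^4 - 13*e^2 + 4*e + 1)*m^2
     - 3*(2*e - 1)*(e + 1)*m
     + 2*(1 - 2*e))"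

definition P7 :: "real \<Rightarrow> real \<Rightarrow> real poly" where
  "P7 m e = Poly [a7 m e, a6 m e, a5 m e, a4 m e, a3 m e, a2 m e, a1 m e, a0 m e]"

end

theory Submission
  imports Defs "HOL-Analysis.Elementary_Topology"
begin

text \<open>On the imaginary axis, \<open>Im (P\<^sub>7(i\<upsilon>)) = \<upsilon> (- a\<^sub>0 \<upsilon>\<^sup>6 + a\<^sub>2 \<upsilon>\<^sup>4 - a\<^sub>4 \<upsilon>\<^sup>2 + a\<^sub>6)\<close>.
  Here \<open>a\<^sub>0 \<ge> 0\<close> always, \<open>a\<^sub>2\<close> is \<open>\<epsilon>(\<epsilon> - 1)\<close> times a factor that is positive at \<open>\<epsilon> = 0\<close>,
  and \<open>a\<^sub>4 > 1\<close> at \<open>\<epsilon> = 0\<close>. By compactness of \<open>[3,7]\<close> these signs persist,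
  uniformly in \<open>m\<close>, for all small \<open>\<epsilon>\<close>, while \<open>a\<^sub>6\<close> stays bounded. Then the bracket is
  negative once \<open>\<upsilon>\<^sup>2\<close> exceeds the bound on \<open>a\<^sub>6\<close>, so large \<open>\<upsilon>\<close> give no roots.\<close>

lemma eventually_nhds_forall_compact_less:
  fixes f :: "'a::topological_space \<Rightarrow> 'b::topological_space \<Rightarrow> real"
  assumes "compact K" and "continuous_on UNIV (\<lambda>(t, x). f t x)" and "\<forall>x\<in>K. L < f t0 x"
  shows "\<forall>\<^sub>F t in nhds t0. \<forall>x\<in>K. L < f t x"
proof -
  let ?W = "{(t, x). L < f t x}"
  have "open ?W"
    using open_Collect_less[OF continuous_on_const assms(2)] by (simp add: case_prod_unfold)
  moreover have "{t0} \<times> K \<subseteq> ?W"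
    using assms(3) by auto
  ultimately obtain T where "t0 \<in> T" "open T" "T \<times> K \<subseteq> ?W"
    using tube_lemma[OF assms(1)] by blast
  then show ?thesis
    unfolding eventually_nhds by (intro exI[of _ T]) auto
qed

lemma Im_poly_P7_imaginary:
  "Im (poly (map_poly complex_of_real (P7 m e)) (\<i> * complex_of_real v))
     = v * (- a0 m e * v^6 + a2 m e * v^4 - a4 m e * v^2 + a6 m e)"
  unfolding P7_def
  by (simp add: map_poly_pCons algebra_simps power2_eq_square power3_eq_cube eval_nat_numeral)

lemma a0_nonneg: "0 \<le> a0 m e"
  unfolding a0_def by (simp add: power_even_eq)

definition a2_cofactor :: "real \<Rightarrow> real \<Rightarrow> real" where
  "a2_cofactor m e = e*(59*e^3 - 9*e^2 + 17*e - 3)*m^4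
     + 4*e*(15*e^3 + 15*e^2 + 17*e + 1)*m^3
     + 4*(e + 2)*(e^3 + 9*e^2 + 5*e + 1)*m^2
     - 8*(2*e^3 - 3*e^2 - 4*e - 3)*m
     - 8*(e - 1)*(e + 2)"

lemma a2_eq_cofactor: "a2 m e = (e^2 - e) * a2_cofactor m e"
  unfolding a2_def a2_cofactor_def ..

lemma a2_nonpos:
  assumes "0 \<le> e" "e \<le> 1" "0 \<le> a2_cofactor m e"
  shows "a2 m e \<le> 0"
proof -
  have "e^2 - e \<le> 0"
    using assms(1,2) mult_left_le[of e e] by (simp add: power2_eq_square)
  then show ?thesis
    unfolding a2_eq_cofactor using assms(3) by (rule mult_nonpos_nonneg)
qed

lemma a2_cofactor_at_0_pos:
  assumes "0 \<le> m"
  shows "0 < a2_cofactor m 0"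
proof -
  have "a2_cofactor m 0 = 8*m^2 + 24*m + 16"
    unfolding a2_cofactor_def by simp
  then show ?thesis
    using assms zero_le_power2[of m] by linarith
qed

lemma a4_at_0_gt_1:
  assumes "3 \<le> m"
  shows "1 < a4 m 0"
proof -
  have a4_0: "a4 m 0 = 256*m^4 - 896*m^2 - 768*m - 128"
    unfolding a4_def by simp
  have "3 * m \<le> m^2"
    using assms by (simp add: power2_eq_square mult_right_mono)
  moreover have "9 * m^2 \<le> m^4"
    using \<open>3 * m \<le> m^2\<close> assms mult_mono[of "3 * m" "m^2" 3 m]
    by (simp add: power2_eq_square power4_eq_xxxx mult_right_mono mult.assoc)
  ultimately show ?thesis
    unfolding a4_0 using assms by linarith
qed

lemma eventually_a2_cofactor_pos:
  "\<forall>\<^sub>F e in nhds 0. \<forall>m\<in>{3..7}. 0 < a2_cofactor m e"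
proof (rule eventually_nhds_forall_compact_less[where f = "\<lambda>e m. a2_cofactor m e"])
  show "continuous_on UNIV (\<lambda>(e, m). a2_cofactor m e)"
    unfolding a2_cofactor_def case_prod_beta by (intro continuous_intros)
qed (auto intro: a2_cofactor_at_0_pos)

lemma eventually_a4_gt_1:
  "\<forall>\<^sub>F e in nhds 0. \<forall>m\<in>{3..7}. 1 < a4 m e"
proof (rule eventually_nhds_forall_compact_less[where f = "\<lambda>e m. a4 m e"])
  show "continuous_on UNIV (\<lambda>(e, m). a4 m e)"
    unfolding a4_def case_prod_beta by (intro continuous_intros)
qed (auto intro: a4_at_0_gt_1)

lemma a6_bounded: "\<exists>B. \<forall>m\<in>{3..7}. \<forall>e\<in>{0..1}. a6 m e \<le> B"
proof -
  let ?box = "{3..7 :: real} \<times> {0..1 :: real}"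
  have "continuous_on ?box (\<lambda>(m, e). a6 m e)"
    unfolding a6_def case_prod_beta by (intro continuous_intros)
  moreover have "compact ?box" "?box \<noteq> {}"
    by (auto intro: compact_Times)
  ultimately obtain p where "\<forall>q\<in>?box. (\<lambda>(m, e). a6 m e) q \<le> (\<lambda>(m, e). a6 m e) p"
    using continuous_attains_sup by blast
  then show ?thesis
    by fastforce
qed

lemma P7_imaginary_root_below:
  assumes "0 \<le> e" "e \<le> 1" "0 \<le> a2_cofactor m e" "1 < a4 m e" "a6 m e \<le> B"
    and root: "poly (map_poly complex_of_real (P7 m e)) (\<i> * complex_of_real v) = 0"
  shows "v < max 1 B"
proof (rule ccontr)
  assume "\<not> v < max 1 B"
  then have "1 \<le> v" "B \<le> v"
    by simp_all
  then have "0 < v"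
    by simp
  have "v * (- a0 m e * v^6 + a2 m e * v^4 - a4 m e * v^2 + a6 m e) = 0"
    using Im_poly_P7_imaginary[of m e v] root by simp
  then have bracket: "- a0 m e * v^6 + a2 m e * v^4 - a4 m e * v^2 + a6 m e = 0"
    using \<open>0 < v\<close> by simp
  have "0 \<le> a0 m e * v^6"
    using a0_nonneg by simp
  moreover have "a2 m e * v^4 \<le> 0"
    using a2_nonpos[OF assms(1-3)] by (simp add: mult_nonpos_nonneg)
  moreover have "v^2 < a4 m e * v^2"
    using mult_strict_right_mono[OF assms(4), of "v^2"] \<open>0 < v\<close> by simp
  moreover have "v \<le> v^2"
    using mult_left_mono[OF \<open>1 \<le> v\<close>, of v] \<open>0 < v\<close> by (simp add: power2_eq_square)
  ultimately show False
    using bracket assms(5) \<open>B \<le> v\<close> by linarith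
qed

theorem lemma5p2:
  "\<exists>\<upsilon>0 > 0. \<exists>\<epsilon>s > 0. \<forall>m \<in> {3..7::real}. \<forall>e \<in> {0<..<\<epsilon>s}. \<forall>\<upsilon> > 0.
     poly (map_poly complex_of_real (P7 m e)) (\<i> * complex_of_real \<upsilon>) = 0 \<longrightarrow> \<upsilon> < \<upsilon>0"
proof -
  obtain B where B: "\<forall>m\<in>{3..7}. \<forall>e\<in>{0..1}. a6 m e \<le> B"
    using a6_bounded by blast
  obtain d where "0 < d" and near_0:
    "\<And>e. \<bar>e\<bar> < d \<Longrightarrow> \<forall>m\<in>{3..7}. 0 < a2_cofactor m e \<and> 1 < a4 m e"
    using eventually_conj[OF eventually_a2_cofactor_pos eventually_a4_gt_1]
    unfolding eventually_nhds_metric dist_real_def by auto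
  have "\<forall>m \<in> {3..7}. \<forall>e \<in> {0<..<min d 1}. \<forall>\<upsilon> > 0.
     poly (map_poly complex_of_real (P7 m e)) (\<i> * complex_of_real \<upsilon>) = 0 \<longrightarrow> \<upsilon> < max 1 B"
  proof (intro ballI allI impI)
    fix m e \<upsilon> :: real
    assume "m \<in> {3..7}" "e \<in> {0<..<min d 1}"
      and root: "poly (map_poly complex_of_real (P7 m e)) (\<i> * complex_of_real \<upsilon>) = 0"
    then show "\<upsilon> < max 1 B"
      using near_0[of e] B
      by (intro P7_imaginary_root_below[OF _ _ _ _ _ root]) (auto intro: less_imp_le)
  qed
  moreover have "0 < max 1 B" "0 < min d 1"
    using \<open>0 < d\<close> by simp_all
  ultimately show ?thesis
    by blast
qed

end
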